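(* Let $A,B,C$ be non-collinear points of the real affine plane. Let $A^{+},A^{-}$ be points on line $\overleftrightarrow{BC}$, $B^{+},B^{-}$ points on line $\overleftrightarrow{CA}$, and $C^{+},C^{-}$ points on line $\overleftrightarrow{AB}$, with $A^{+}\neq C$, $A^{-}\neq B$, $B^{+}\neq A$, $B^{-}\neq C$, $C^{+}\neq B$, $C^{-}\neq A$, and define $$a^{+}=\frac{|BA^{+}|}{|A^{+}C|},\quad b^{+}=\frac{|CB^{+}|}{|B^{+}A|},\quad c^{+}=\frac{|AC^{+}|}{|C^{+}B|},\quad a^{-}=\frac{|CA^{-}|}{|A^{-}B|},\quad b^{-}=\frac{|AB^{-}|}{|B^{-}C|},\quad c^{-}=\frac{|BC^{-}|}{|C^{-}A|}.$$ Suppose $(1+b^{-}+c^{+})(1+c^{-}+a^{+})(1+a^{-}+b^{+})\neq 0$, so that the points $X=\overleftrightarrow{BB^{-}}\cap\overleftrightarrow{CC^{+}}$, $Y=\overleftrightarrow{CC^{-}}\cap\overleftrightarrow{AA^{+}}$, $Z=\overleftrightarrow{AA^{-}}\cap\overleftrightarrow{BB^{+}}$ are finite points. Then the signed area of triangle $XYZ$ is $$|\triangle XYZ|=|\triangle ABC|\cdot\frac{a^{+}b^{+}c^{+}+a^{-}b^{-}c^{-}-a^{+}a^{-}-b^{+}b^{-}-c^{+}c^{-}+1}{(1+b^{-}+c^{+})(1+c^{-}+a^{+})(1+a^{-}+b^{+})}.$$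
   Context: Segment lengths are signed: for points on one of the lines $\overleftrightarrow{AB}$, $\overleftrightarrow{BC}$, $\overleftrightarrow{CA}$, $|PQ|$ is positive when $\overrightarrow{PQ}$ points in the direction of $\overrightarrow{AB}$, $\overrightarrow{BC}$, $\overrightarrow{CA}$ respectively; $|PP|/|PQ|=0$. Equivalently, e.g. $A^{+}=(B+a^{+}C)/(1+a^{+})$, $A^{-}=(a^{-}B+C)/(1+a^{-})$ as vectors, and similarly for the others. Triangle areas are signed: $|\triangle XYZ|$ and $|\triangle ABC|$ have the same sign exactly when the vertex paths $X$-$Y$-$Z$-$X$ and $A$-$B$-$C$-$A$ traverse their triangles in the same rotational direction. *)

theory Defs
  imports "HOL-Analysis.Analysis"
begin

text \<open>Signed ratio |PQ|/|RS| of segments lying on a common line with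
  reference direction d: signed lengths are measured along d.\<close>
definition sratio :: "real^2 \<Rightarrow> real^2 \<Rightarrow> real^2 \<Rightarrow> real^2 \<Rightarrow> real^2 \<Rightarrow> real" where
  "sratio d P Q R S = ((Q - P) \<bullet> d) / ((S - R) \<bullet> d)"

text \<open>Signed area of triangle PQR (positive iff P-Q-R is counterclockwise).\<close>
definition signed_area :: "real^2 \<Rightarrow> real^2 \<Rightarrow> real^2 \<Rightarrow> real" where
  "signed_area P Q R =
     ((Q$1 - P$1) * (R$2 - P$2) - (Q$2 - P$2) * (R$1 - P$1)) / 2"

end

theory Submission
  imports Defs
begin

(* The proof works in homogeneous barycentric coordinates with respect to the
   triangle ABC: bary x y z A B C is the point (x A + y B + z C) / (x + y + z).

   1. A point P of line QR, P \<noteq> R, whose signed ratio |QP|/|PR| is r, equals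
      (Q + r R) / (1 + r)  (point_by_sratio).
   2. Mass points: cevians from Q and R through (P + t R)/(1 + t) and
      (P + s Q)/(1 + s) meet at bary 1 s t P Q R  (cevians_meet, proved by
      comparing coefficients in the basis Q - P, R - P); combined with 1 this
      gives cevian_intersection, stated directly in terms of signed ratios.
      Hence X, Y, Z have coordinates (1 : c+ : b-), (c- : 1 : a+), (b+ : a- : 1).
   3. The signed area of three points given in barycentric coordinates is the
      area of ABC times the determinant of their normalized coordinates
      (signed_area_bary).  Expanding the 3x3 determinant of the coordinates of
      X, Y, Z gives the numerator of the theorem. *)

definition bary :: "real \<Rightarrow> real \<Rightarrow> real \<Rightarrow> real^2 \<Rightarrow> real^2 \<Rightarrow> real^2 \<Rightarrow> real^2" where
  "bary x y z A B C = (1 / (x + y + z)) *\<^sub>R (x *\<^sub>R A + y *\<^sub>R B + z *\<^sub>R C)"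

lemma bary_rotate: "bary x y z A B C = bary z x y C A B"
  unfolding bary_def by (simp add: algebra_simps)

lemma bary_as_affine:
  assumes "x + y + z \<noteq> 0"
  shows "bary x y z A B C
    = A + (y / (x + y + z)) *\<^sub>R (B - A) + (z / (x + y + z)) *\<^sub>R (C - A)"
proof -
  have "x *\<^sub>R A + y *\<^sub>R B + z *\<^sub>R C
      = (x + y + z) *\<^sub>R A + y *\<^sub>R (B - A) + z *\<^sub>R (C - A)"
    by (simp add: algebra_simps)
  then show ?thesis
    using assms unfolding bary_def by (simp add: scaleR_add_right)
qed

lemma edge_vectors_independent:
  fixes P Q R :: "real^2"
  assumes ncol: "\<not> collinear {P, Q, R}" and comb: "a *\<^sub>R (Q - P) + b *\<^sub>R (R - P) = 0"
  shows "a = 0 \<and> b = 0"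
proof (rule ccontr)
  assume "\<not> (a = 0 \<and> b = 0)"
  then have "collinear {0, Q - P, R - P}"
  proof (cases "a = 0")
    case True
    then have "R - P = 0" using comb \<open>\<not> (a = 0 \<and> b = 0)\<close> by simp
    then show ?thesis by (simp add: collinear_lemma)
  next
    case False
    have neg: "a *\<^sub>R (Q - P) = - (b *\<^sub>R (R - P))"
      using comb by (simp add: eq_neg_iff_add_eq_0)
    have "Q - P = (1 / a) *\<^sub>R (a *\<^sub>R (Q - P))"
      using False by simp
    also have "\<dots> = (1 / a) *\<^sub>R (- (b *\<^sub>R (R - P)))"
      by (simp only: neg)
    also have "\<dots> = (- b / a) *\<^sub>R (R - P)"
      by simp
    finally have "Q - P = (- b / a) *\<^sub>R (R - P)" .
    then show ?thesis by (metis collinear_lemma insert_commute)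
  qed
  then have "collinear {Q, P, R}" by (auto simp: collinear_3)
  then show False using ncol by (simp add: insert_commute)
qed

lemma point_by_sratio:
  fixes P Q R d :: "real^2"
  assumes on_line: "P \<in> affine hull {Q, R}" and "P \<noteq> R" and "Q \<noteq> R"
    and dir: "d = k *\<^sub>R (R - Q)" "k \<noteq> 0"
  defines "r \<equiv> sratio d Q P P R"
  shows "1 + r \<noteq> 0" and "P = (1 / (1 + r)) *\<^sub>R (Q + r *\<^sub>R R)"
proof -
  obtain g where g: "P = Q + g *\<^sub>R (R - Q)"
    using on_line by (auto simp: affine_hull_2_alt)
  have g1: "1 - g \<noteq> 0" using g \<open>P \<noteq> R\<close> by auto
  have len: "k * ((R - Q) \<bullet> (R - Q)) \<noteq> 0" using dir \<open>Q \<noteq> R\<close> by simp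
  have "P - Q = g *\<^sub>R (R - Q)" and "R - P = (1 - g) *\<^sub>R (R - Q)"
    using g by (simp_all add: algebra_simps)
  then have r: "r = g / (1 - g)"
    using len g1 unfolding r_def sratio_def dir by (simp add: inner_scaleR_left inner_scaleR_right)
  have "1 + r = 1 / (1 - g)" using g1 unfolding r by (simp add: field_simps)
  then have inv: "1 / (1 + r) = 1 - g" by simp
  then show "1 + r \<noteq> 0" using g1 by auto
  have "(1 - g) * r = g" using g1 unfolding r by simp
  then have "(1 / (1 + r)) *\<^sub>R (Q + r *\<^sub>R R) = (1 - g) *\<^sub>R Q + g *\<^sub>R R"
    by (simp add: inv scaleR_add_right)
  also have "\<dots> = P"
    using g by (simp add: algebra_simps)
  finally show "P = (1 / (1 + r)) *\<^sub>R (Q + r *\<^sub>R R)" ..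
qed

lemma division_point_as_affine:
  fixes P R :: "real^2"
  assumes "1 + t \<noteq> 0"
  shows "(1 / (1 + t)) *\<^sub>R (P + t *\<^sub>R R) = P + (t / (1 + t)) *\<^sub>R (R - P)"
proof -
  have "P + t *\<^sub>R R = (1 + t) *\<^sub>R P + t *\<^sub>R (R - P)"
    by (simp add: algebra_simps)
  then show ?thesis
    using assms by (simp add: scaleR_add_right)
qed

lemma cevians_meet:
  fixes P Q R X :: "real^2"
  assumes ncol: "\<not> collinear {P, Q, R}"
    and nz: "1 + s \<noteq> 0" "1 + t \<noteq> 0" "1 + s + t \<noteq> 0"
    and on_Q: "X \<in> affine hull {Q, (1 / (1 + t)) *\<^sub>R (P + t *\<^sub>R R)}"
    and on_R: "X \<in> affine hull {R, (1 / (1 + s)) *\<^sub>R (P + s *\<^sub>R Q)}"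
  shows "X = bary 1 s t P Q R"
proof -
  obtain u where u: "X = Q + u *\<^sub>R ((1 / (1 + t)) *\<^sub>R (P + t *\<^sub>R R) - Q)"
    using on_Q by (auto simp: affine_hull_2_alt)
  obtain v where v: "X = R + v *\<^sub>R ((1 / (1 + s)) *\<^sub>R (P + s *\<^sub>R Q) - R)"
    using on_R by (auto simp: affine_hull_2_alt)
  have X_u: "X = P + (1 - u) *\<^sub>R (Q - P) + (u * t / (1 + t)) *\<^sub>R (R - P)"
    unfolding u division_point_as_affine[OF nz(2)] by (simp add: algebra_simps)
  have X_v: "X = P + (v * s / (1 + s)) *\<^sub>R (Q - P) + (1 - v) *\<^sub>R (R - P)"
    unfolding v division_point_as_affine[OF nz(1)] by (simp add: algebra_simps)
  have "(1 - u - v * s / (1 + s)) *\<^sub>R (Q - P) + (u * t / (1 + t) - (1 - v)) *\<^sub>R (R - P) = 0"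
    using X_u X_v by (simp add: algebra_simps)
  from edge_vectors_independent[OF ncol this]
  have coeff_Q: "1 - u = v * s / (1 + s)" and coeff_R: "u * t / (1 + t) = 1 - v"
    by simp_all
  have eq_Q: "(1 - u) * (1 + s) = v * s"
    using coeff_Q nz(1) by (simp add: eq_divide_eq)
  have eq_R: "u * t = (1 - v) * (1 + t)"
    using coeff_R nz(2) by (simp add: divide_eq_eq)
  have "u * (1 + s + t) = 1 + t"
    using eq_Q eq_R by algebra
  then have "1 - u = s / (1 + s + t)" and "u * t / (1 + t) = t / (1 + s + t)"
    using nz by (simp_all add: field_simps)
  then show ?thesis
    using X_u bary_as_affine[of 1 s t P Q R] nz by simp
qed

lemma signed_area_affine:
  fixes A B C :: "real^2"
  shows "signed_area (A + u1 *\<^sub>R (B - A) + v1 *\<^sub>R (C - A))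
            (A + u2 *\<^sub>R (B - A) + v2 *\<^sub>R (C - A)) (A + u3 *\<^sub>R (B - A) + v3 *\<^sub>R (C - A))
       = signed_area A B C * ((u2 - u1) * (v3 - v1) - (v2 - v1) * (u3 - u1))"
  unfolding signed_area_def by (simp add: algebra_simps)

lemma signed_area_bary:
  fixes A B C :: "real^2"
  assumes sx: "x1 + x2 + x3 \<noteq> 0" and sy: "y1 + y2 + y3 \<noteq> 0" and sz: "z1 + z2 + z3 \<noteq> 0"
  shows "signed_area (bary x1 x2 x3 A B C) (bary y1 y2 y3 A B C) (bary z1 z2 z3 A B C)
       = signed_area A B C
         * ((x1 * (y2 * z3 - y3 * z2) - x2 * (y1 * z3 - y3 * z1) + x3 * (y1 * z2 - y2 * z1))
            / ((x1 + x2 + x3) * (y1 + y2 + y3) * (z1 + z2 + z3)))"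
proof -
  define p q r where "p = x1 + x2 + x3" and "q = y1 + y2 + y3" and "r = z1 + z2 + z3"
  have nz: "p \<noteq> 0" "q \<noteq> 0" "r \<noteq> 0" using sx sy sz by (simp_all add: p_def q_def r_def)
  have first: "x1 = p - x2 - x3" "y1 = q - y2 - y3" "z1 = r - z2 - z3"
    by (simp_all add: p_def q_def r_def)
  have "(y2 / q - x2 / p) * (z3 / r - x3 / p) - (y3 / q - x3 / p) * (z2 / r - x2 / p)
      = (x1 * (y2 * z3 - y3 * z2) - x2 * (y1 * z3 - y3 * z1) + x3 * (y1 * z2 - y2 * z1))
        / (p * q * r)"
    unfolding first using nz by (simp add: field_simps)
  then show ?thesis
    unfolding bary_as_affine[OF sx] bary_as_affine[OF sy] bary_as_affine[OF sz] signed_area_affine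
    by (simp add: p_def q_def r_def)
qed

lemma cevian_intersection:
  fixes P Q R S T X :: "real^2"
  assumes ncol: "\<not> collinear {P, Q, R}"
    and S: "S \<in> affine hull {P, Q}" "S \<noteq> Q" and T: "T \<in> affine hull {R, P}" "T \<noteq> R"
    and nz: "1 + sratio (P - R) P T T R + sratio (Q - P) P S S Q \<noteq> 0"
    and X: "X \<in> affine hull {Q, T}" "X \<in> affine hull {R, S}"
  shows "X = bary 1 (sratio (Q - P) P S S Q) (sratio (P - R) P T T R) P Q R"
proof -
  have "P \<noteq> Q" and "P \<noteq> R" using ncol by (auto simp: insert_commute)
  have T_on: "T \<in> affine hull {P, R}" using T(1) by (simp add: insert_commute)
  have "P - R = (- 1) *\<^sub>R (R - P)" and "Q - P = 1 *\<^sub>R (Q - P)" by simp_all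
  note T_ratio = point_by_sratio[OF T_on T(2) \<open>P \<noteq> R\<close> this(1)]
   and S_ratio = point_by_sratio[OF S \<open>P \<noteq> Q\<close> this(2)]
  show ?thesis
  proof (rule cevians_meet[OF ncol])
    show "X \<in> affine hull {Q, (1 / (1 + sratio (P - R) P T T R)) *\<^sub>R (P + sratio (P - R) P T T R *\<^sub>R R)}"
      using X(1) T_ratio by simp
    show "X \<in> affine hull {R, (1 / (1 + sratio (Q - P) P S S Q)) *\<^sub>R (P + sratio (Q - P) P S S Q *\<^sub>R Q)}"
      using X(2) S_ratio by simp
  qed (use nz T_ratio S_ratio in \<open>simp_all add: add_ac\<close>)
qed

theorem theorem5:
  fixes A B C Ap Am Bp Bm Cp Cm X Y Z :: "real^2"
  assumes ncol: "\<not> collinear {A, B, C}"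
    and onA: "Ap \<in> affine hull {B, C}" "Am \<in> affine hull {B, C}"
    and onB: "Bp \<in> affine hull {C, A}" "Bm \<in> affine hull {C, A}"
    and onC: "Cp \<in> affine hull {A, B}" "Cm \<in> affine hull {A, B}"
    and ne: "Ap \<noteq> C" "Am \<noteq> B" "Bp \<noteq> A" "Bm \<noteq> C" "Cp \<noteq> B" "Cm \<noteq> A"
    and nz: "(1 + sratio (A - C) A Bm Bm C + sratio (B - A) A Cp Cp B)
           * (1 + sratio (B - A) B Cm Cm A + sratio (C - B) B Ap Ap C)
           * (1 + sratio (C - B) C Am Am B + sratio (A - C) C Bp Bp A) \<noteq> 0"
    and X: "X \<in> affine hull {B, Bm}" "X \<in> affine hull {C, Cp}"
    and Y: "Y \<in> affine hull {C, Cm}" "Y \<in> affine hull {A, Ap}"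
    and Z: "Z \<in> affine hull {A, Am}" "Z \<in> affine hull {B, Bp}"
  shows "let ap = sratio (C - B) B Ap Ap C; bp = sratio (A - C) C Bp Bp A;
             cp = sratio (B - A) A Cp Cp B; am = sratio (C - B) C Am Am B;
             bm = sratio (A - C) A Bm Bm C; cm = sratio (B - A) B Cm Cm A
         in signed_area X Y Z = signed_area A B C *
              ((ap * bp * cp + am * bm * cm - ap * am - bp * bm - cp * cm + 1)
               / ((1 + bm + cp) * (1 + cm + ap) * (1 + am + bp)))"
proof -
  have ncol_B: "\<not> collinear {B, C, A}" and ncol_C: "\<not> collinear {C, A, B}"
    using ncol by (simp_all add: insert_commute)
  define ap bp cp am bm cm
    where "ap = sratio (C - B) B Ap Ap C" and "bp = sratio (A - C) C Bp Bp A"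
      and "cp = sratio (B - A) A Cp Cp B" and "am = sratio (C - B) C Am Am B"
      and "bm = sratio (A - C) A Bm Bm C" and "cm = sratio (B - A) B Cm Cm A"
  have sums: "1 + bm + cp \<noteq> 0" "1 + cm + ap \<noteq> 0" "1 + am + bp \<noteq> 0"
    using nz unfolding ap_def bp_def cp_def am_def bm_def cm_def by auto
  have X_bary: "X = bary 1 cp bm A B C"
    unfolding cp_def bm_def by (rule cevian_intersection[OF ncol onC(1) ne(5) onB(2) ne(4)])
      (use sums X in \<open>simp_all add: bm_def cp_def\<close>)
  have "Y = bary 1 ap cm B C A"
    unfolding ap_def cm_def by (rule cevian_intersection[OF ncol_B onA(1) ne(1) onC(2) ne(6)])
      (use sums Y in \<open>simp_all add: ap_def cm_def\<close>)
  then have Y_bary: "Y = bary cm 1 ap A B C"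
    by (simp only: bary_rotate)
  have "Z = bary 1 bp am C A B"
    unfolding am_def bp_def by (rule cevian_intersection[OF ncol_C onB(1) ne(3) onA(2) ne(2)])
      (use sums Z in \<open>simp_all add: am_def bp_def\<close>)
  then have Z_bary: "Z = bary bp am 1 A B C"
    by (simp only: bary_rotate[of 1 bp am C A B] bary_rotate[of am 1 bp B C A])
  have "signed_area X Y Z = signed_area A B C
      * ((1 * (1 * 1 - ap * am) - cp * (cm * 1 - ap * bp) + bm * (cm * am - 1 * bp))
         / ((1 + cp + bm) * (cm + 1 + ap) * (bp + am + 1)))"
    unfolding X_bary Y_bary Z_bary by (rule signed_area_bary) (use sums in \<open>simp_all add: add_ac\<close>)
  also have "1 * (1 * 1 - ap * am) - cp * (cm * 1 - ap * bp) + bm * (cm * am - 1 * bp)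
      = ap * bp * cp + am * bm * cm - ap * am - bp * bm - cp * cm + 1"
    by algebra
  also have "(1 + cp + bm) * (cm + 1 + ap) * (bp + am + 1) = (1 + bm + cp) * (1 + cm + ap) * (1 + am + bp)"
    by (simp add: add_ac)
  finally show ?thesis
    unfolding Let_def ap_def bp_def cp_def am_def bm_def cm_def .
qed

end
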